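(* Let $\lambda\in(0,1)$, let $\tau_0(x)=\lambda x$, $\tau_{1/4}(x)=\lambda(x+\frac14)$, let $X_L$ be their attractor, let $W(x)=\cos^2(2\pi x/\lambda)$, and let $R_W$, $P_x$, $\mathbf{N}_0$, $\mathbf{N}_1$, $h_0$, $h_1$ be as described in the context. Then: (1) $h_0$ is continuous on $X_L$ and $R_Wh_0=h_0$. If $h_0$ has no zeroes on $X_L$, then $h_0\equiv1$. (2) If $\lambda=1-\frac1{2n}$ for some $n\in\mathbb{N}$, then $h_1$ is continuous on $X_L$ and $R_Wh_1=h_1$; both $h_0$ and $h_1$ have zeroes and both are non-constant. If $h_0+h_1$ has no zeroes on $X_L$, then $h_0+h_1\equiv1$.
   Context: $X_L$ is the unique nonempty compact set with $X_L=\tau_0(X_L)\cup\tau_{1/4}(X_L)$. Note $W(\tau_0x)+W(\tau_{1/4}x)=1$ for all $x$. The transfer operator is $(R_Wf)(x)=W(\tau_0x)f(\tau_0x)+W(\tau_{1/4}x)f(\tau_{1/4}x)$. Let $\Omega=\{0,\frac14\}^{\mathbb{N}}$ with the $\sigma$-algebra generated by cylinder sets. For $x\in X_L$, $P_x$ is the unique probability measure on $\Omega$ such that for every $n$ and $\omega_1,\dots,\omega_n\in\{0,\frac14\}$, the cylinder $\{\eta\in\Omega:\eta_i=\omega_i,\ i\le n\}$ has measure $W(\tau_{\omega_1}x)W(\tau_{\omega_2}\tau_{\omega_1}x)\cdots W(\tau_{\omega_n}\cdots\tau_{\omega_1}x)$. $\mathbf{N}_0$ is the set of $\omega\in\Omega$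 with $\omega_n=0$ for all sufficiently large $n$; $\mathbf{N}_1$ is the set of $\omega\in\Omega$ with $\omega_n=\frac14$ for all sufficiently large $n$. $h_0(x)=P_x(\mathbf{N}_0)$ and $h_1(x)=P_x(\mathbf{N}_1)$ for $x\in X_L$. *)

theory Defs
  imports "HOL-Probability.Probability"
begin

definition tau :: "real \<Rightarrow> real \<Rightarrow> real \<Rightarrow> real" where
  "tau lam a x = lam * (x + a)"

definition XL :: "real \<Rightarrow> real set" where
  "XL lam = (THE X. compact X \<and> X \<noteq> {} \<and>
      X = tau lam 0 ` X \<union> tau lam (1/4) ` X)"

definition W :: "real \<Rightarrow> real \<Rightarrow> real" where
  "W lam x = (cos (2 * pi * x / lam))\<^sup>2"

definition RW :: "real \<Rightarrow> (real \<Rightarrow> real) \<Rightarrow> real \<Rightarrow> real" where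
  "RW lam f x = W lam (tau lam 0 x) * f (tau lam 0 x)
              + W lam (tau lam (1/4) x) * f (tau lam (1/4) x)"

text \<open>Path space Omega = {0,1/4}^N; the sequence omega_1, omega_2, ... is stored as omega 0, omega 1, ...\<close>
definition Omega :: "(nat \<Rightarrow> real) set" where
  "Omega = (UNIV \<rightarrow> {0, 1/4})"

definition cyl :: "nat \<Rightarrow> (nat \<Rightarrow> real) \<Rightarrow> (nat \<Rightarrow> real) set" where
  "cyl n \<omega> = {\<eta> \<in> Omega. \<forall>i<n. \<eta> i = \<omega> i}"

definition Cyls :: "(nat \<Rightarrow> real) set set" where
  "Cyls = {cyl n \<omega> | n \<omega>. \<omega> \<in> Omega}"

fun orbit :: "real \<Rightarrow> real \<Rightarrow> (nat \<Rightarrow> real) \<Rightarrow> nat \<Rightarrow> real" where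
  "orbit lam x \<omega> 0 = x"
| "orbit lam x \<omega> (Suc k) = tau lam (\<omega> k) (orbit lam x \<omega> k)"

definition Px :: "real \<Rightarrow> real \<Rightarrow> (nat \<Rightarrow> real) measure" where
  "Px lam x = (THE M. prob_space M \<and> space M = Omega \<and> sets M = sigma_sets Omega Cyls \<and>
      (\<forall>n. \<forall>\<omega>\<in>Omega. emeasure M (cyl n \<omega>) =
          ennreal (\<Prod>k\<in>{1..n}. W lam (orbit lam x \<omega> k))))"

definition N0 :: "(nat \<Rightarrow> real) set" where
  "N0 = {\<omega> \<in> Omega. \<exists>N. \<forall>n\<ge>N. \<omega> n = 0}"

definition N1 :: "(nat \<Rightarrow> real) set" where
  "N1 = {\<omega> \<in> Omega. \<exists>N. \<forall>n\<ge>N. \<omega> n = 1/4}"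

definition h0 :: "real \<Rightarrow> real \<Rightarrow> real" where
  "h0 lam x = measure (Px lam x) N0"

definition h1 :: "real \<Rightarrow> real \<Rightarrow> real" where
  "h1 lam x = measure (Px lam x) N1"

end

theory Submission
  imports Defs
begin

(* P_x is the image of Lebesgue measure on [0,1) under an x-dependent digit expansion, and the
   weights of all cylinders of a given length depend Lipschitz-continuously on x in l1. Hence
   x \<mapsto> P_x(E) is Lipschitz for every countable E, and for shift-invariant E the Markov property
   makes it a fixed point of R_W.
   Let h(x) = P_x(E) for E = N0 or E = N0 \<union> N1 and let x minimise h on the compact attractor.
   If h(x) > 0, some path \<omega> \<in> E is an atom of P_x; then every prefix of \<omega> has positive weight,
   and the minimum principle for R_W-harmonic functions keeps h minimal along the orbit of x
   driven by \<omega>. Since \<omega> is eventually constant, this orbit converges to the fixed point of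
   \<tau>_0 or \<tau>_{1/4}, where h = 1 because the constant path has probability 1 there. So min h = 1.
   For lam = 1 - 1/(2n) the fixed point c = (2n - 1)/4 of \<tau>_{1/4} satisfies sin\<^sup>2(2\<pi>c) = 1,
   which gives h1(c) = 1 = h0(0) and h0(c) = 0 = h1(0). *)

lemma abs_cos_squared_diff_le: "\<bar>(cos a)\<^sup>2 - (cos b)\<^sup>2\<bar> \<le> \<bar>a - b\<bar>" for a b :: real
proof -
  have "sin (a + b) * sin (b - a) = (cos a)\<^sup>2 * (sin b)\<^sup>2 - (sin a)\<^sup>2 * (cos b)\<^sup>2"
    by (simp add: sin_add sin_diff algebra_simps power2_eq_square)
  also have "\<dots> = (cos a)\<^sup>2 - (cos b)\<^sup>2"
    by (simp add: sin_squared_eq algebra_simps)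
  finally have "(cos a)\<^sup>2 - (cos b)\<^sup>2 = sin (a + b) * sin (b - a)" ..
  also have "\<bar>\<dots>\<bar> \<le> 1 * \<bar>b - a\<bar>"
    unfolding abs_mult by (intro mult_mono abs_sin_x_le_abs_x) auto
  finally show ?thesis by simp
qed

lemma sum_abs_diff_mult_le:
  fixes p q :: "'a \<Rightarrow> real"
  assumes "0 \<le> A" "\<And>w. w \<in> S \<Longrightarrow> 0 \<le> q w"
  shows "(\<Sum>w\<in>S. \<bar>A * p w - B * q w\<bar>) \<le> A * (\<Sum>w\<in>S. \<bar>p w - q w\<bar>) + \<bar>A - B\<bar> * (\<Sum>w\<in>S. q w)"
proof -
  have "\<bar>A * p w - B * q w\<bar> \<le> A * \<bar>p w - q w\<bar> + \<bar>A - B\<bar> * q w" if "w \<in> S" for w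
  proof -
    have "\<bar>A * p w - B * q w\<bar> = \<bar>A * (p w - q w) + (A - B) * q w\<bar>"
      by (simp add: algebra_simps)
    also have "\<dots> \<le> \<bar>A * (p w - q w)\<bar> + \<bar>(A - B) * q w\<bar>"
      by (rule abs_triangle_ineq)
    finally show ?thesis
      using assms that by (simp add: abs_mult)
  qed
  then have "(\<Sum>w\<in>S. \<bar>A * p w - B * q w\<bar>) \<le> (\<Sum>w\<in>S. A * \<bar>p w - q w\<bar> + \<bar>A - B\<bar> * q w)"
    by (rule sum_mono)
  then show ?thesis
    by (simp add: sum_distrib_left sum.distrib)
qed

lemma abs_diff_le_of_tendsto:
  fixes f g :: "nat \<Rightarrow> real"
  assumes "f \<longlonglongrightarrow> a" "g \<longlonglongrightarrow> b" "\<And>n. \<bar>f n - g n\<bar> \<le> c"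
  shows "\<bar>a - b\<bar> \<le> c"
proof (rule LIMSEQ_le_const2)
  show "(\<lambda>n. \<bar>f n - g n\<bar>) \<longlonglongrightarrow> \<bar>a - b\<bar>"
    by (intro tendsto_intros assms)
qed (use assms(3) in auto)

lemma exists_atom_countable:
  assumes "countable E" "\<And>\<omega>. \<omega> \<in> E \<Longrightarrow> {\<omega>} \<in> sets M" "emeasure M E \<noteq> 0"
  shows "\<exists>\<omega>\<in>E. emeasure M {\<omega>} \<noteq> 0"
proof (rule ccontr)
  assume "\<not> (\<exists>\<omega>\<in>E. emeasure M {\<omega>} \<noteq> 0)"
  then have "(\<integral>\<^sup>+\<omega>. emeasure M {\<omega>} \<partial>count_space E) = (\<integral>\<^sup>+\<omega>. 0 \<partial>count_space E)"
    by (intro nn_integral_cong) simp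
  with emeasure_countable_singleton[OF assms(2,1)] assms(3) show False
    by simp
qed

lemma W_nonneg: "0 \<le> W lam y"
  by (simp add: W_def)

definition words :: "nat \<Rightarrow> real list set" where
  "words n = {w. set w \<subseteq> {0, 1/4} \<and> length w = n}"

lemma finite_words: "finite (words n)"
  unfolding words_def by (rule finite_lists_length_eq) simp

lemma words_0: "words 0 = {[]}"
  by (auto simp: words_def)

lemma words_Suc: "words (Suc n) = Cons 0 ` words n \<union> Cons (1/4) ` words n"
  by (auto simp: words_def length_Suc_conv)

lemma sum_words_Suc:
  "(\<Sum>w\<in>words (Suc n). f w) = (\<Sum>w\<in>words n. f (0 # w)) + (\<Sum>w\<in>words n. f (1/4 # w))"
  unfolding words_Suc by (subst sum.union_disjoint) (auto simp: finite_words sum.reindex)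

fun word_weight :: "real \<Rightarrow> real \<Rightarrow> real list \<Rightarrow> real" where
  "word_weight lam x [] = 1"
| "word_weight lam x (a # w) = W lam (tau lam a x) * word_weight lam (tau lam a x) w"

lemma word_weight_nonneg: "0 \<le> word_weight lam x w"
  by (induction w arbitrary: x) (simp_all add: W_nonneg)

lemma word_weight_snoc:
  "word_weight lam x (w @ [a]) = word_weight lam x w * W lam (tau lam a (fold (tau lam) w x))"
  by (induction w arbitrary: x) simp_all

lemma orbit_eq_fold: "orbit lam x \<omega> k = fold (tau lam) (map \<omega> [0..<k]) x"
  by (induction k) simp_all

lemma prod_orbit_eq_word_weight:
  "(\<Prod>k\<in>{1..n}. W lam (orbit lam x \<omega> k)) = word_weight lam x (map \<omega> [0..<n])"
  by (induction n) (simp_all add: word_weight_snoc orbit_eq_fold)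

lemma Omega_iff: "\<omega> \<in> Omega \<longleftrightarrow> (\<forall>i. \<omega> i \<in> {0, 1/4})"
  by (auto simp: Omega_def)

lemma set_prefix_subset:
  assumes "\<omega> \<in> Omega"
  shows "set (map \<omega> [0..<n]) \<subseteq> {0, 1/4}"
proof
  fix a assume "a \<in> set (map \<omega> [0..<n])"
  then obtain i where "a = \<omega> i" by auto
  with assms show "a \<in> {0, 1/4}" unfolding Omega_iff by blast
qed

lemma prefix_in_words: "\<omega> \<in> Omega \<Longrightarrow> map \<omega> [0..<n] \<in> words n"
  using set_prefix_subset[of \<omega> n] by (simp add: words_def)

lemma Omega_digit: "\<omega> \<in> Omega \<Longrightarrow> \<omega> i = 0 \<or> \<omega> i = 1/4"
  by (auto simp: Omega_iff simp del: eq_divide_eq_numeral1)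

lemma case_nat_in_Omega: "a \<in> {0, 1/4} \<Longrightarrow> \<eta> \<in> Omega \<Longrightarrow> case_nat a \<eta> \<in> Omega"
  by (auto simp: Omega_iff split: nat.split)

lemma comp_Suc_in_Omega: "\<omega> \<in> Omega \<Longrightarrow> \<omega> \<circ> Suc \<in> Omega"
  by (simp add: Omega_iff)

lemma Cyls_subset_Pow: "Cyls \<subseteq> Pow Omega"
  by (auto simp: Cyls_def cyl_def)

lemma Omega_in_Cyls: "Omega \<in> Cyls"
proof -
  have "Omega = cyl 0 (\<lambda>_. 0)" "(\<lambda>_. 0) \<in> Omega"
    by (simp_all add: cyl_def Omega_def)
  then show ?thesis unfolding Cyls_def by blast
qed

lemma cyl_in_sigma_sets: "\<omega> \<in> Omega \<Longrightarrow> cyl n \<omega> \<in> sigma_sets Omega Cyls"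
  by (auto simp: Cyls_def)

lemma cyl_Suc_subset: "cyl (Suc n) \<omega> \<subseteq> cyl n \<omega>"
  by (auto simp: cyl_def)

lemma singleton_eq_INT_cyl: "\<omega> \<in> Omega \<Longrightarrow> {\<omega>} = (\<Inter>n. cyl n \<omega>)"
proof
  show "(\<Inter>n. cyl n \<omega>) \<subseteq> {\<omega>}"
  proof
    fix \<eta> assume \<eta>: "\<eta> \<in> (\<Inter>n. cyl n \<omega>)"
    have "\<eta> i = \<omega> i" for i
    proof -
      have "\<eta> \<in> cyl (Suc i) \<omega>" using \<eta> by blast
      then show ?thesis by (simp add: cyl_def)
    qed
    then show "\<eta> \<in> {\<omega>}" by (simp add: fun_eq_iff)
  qed
qed (auto simp: cyl_def)

lemma INT_UN_cyl_eq:
  assumes "finite F" "F \<subseteq> Omega"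
  shows "(\<Inter>n. \<Union>\<omega>\<in>F. cyl n \<omega>) = F"
proof (intro equalityI subsetI)
  fix \<eta> assume \<eta>: "\<eta> \<in> (\<Inter>n. \<Union>\<omega>\<in>F. cyl n \<omega>)"
  show "\<eta> \<in> F"
  proof (rule ccontr)
    assume "\<eta> \<notin> F"
    have "\<forall>\<omega>\<in>F. \<forall>\<^sub>F n in sequentially. \<eta> \<notin> cyl n \<omega>"
    proof
      fix \<omega> assume "\<omega> \<in> F"
      with \<open>\<eta> \<notin> F\<close> obtain i where "\<eta> i \<noteq> \<omega> i" by (metis ext)
      then show "\<forall>\<^sub>F n in sequentially. \<eta> \<notin> cyl n \<omega>"
        unfolding eventually_sequentially
        by (intro exI[of _ "Suc i"] allI impI) (auto simp: cyl_def Suc_le_eq)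
    qed
    with assms(1) have "\<forall>\<^sub>F n in sequentially. \<forall>\<omega>\<in>F. \<eta> \<notin> cyl n \<omega>"
      by (rule eventually_ball_finite)
    with \<eta> show False
      by (auto simp: eventually_sequentially)
  qed
qed (use assms(2) in \<open>auto simp: cyl_def\<close>)

lemma Int_stable_Cyls: "Int_stable (insert {} Cyls)"
proof (rule Int_stableI)
  fix A B assume A: "A \<in> insert {} Cyls" and B: "B \<in> insert {} Cyls"
  show "A \<inter> B \<in> insert {} Cyls"
  proof (cases "A \<inter> B = {}")
    case False
    then obtain \<zeta> where \<zeta>: "\<zeta> \<in> A \<inter> B" by blast
    with A B obtain n m \<omega> \<eta> where "A = cyl n \<omega>" "B = cyl m \<eta>"
      by (auto simp: Cyls_def)
    with \<zeta> have "A \<inter> B = cyl (max n m) \<zeta>" "\<zeta> \<in> Omega"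
      by (auto simp: cyl_def less_max_iff_disj)
    then show ?thesis by (auto simp: Cyls_def)
  qed simp
qed

lemma measure_eqI_cylinders:
  assumes "sets M = sigma_sets Omega Cyls" "sets N = sigma_sets Omega Cyls"
    and "emeasure M Omega \<noteq> \<infinity>"
    and "\<And>n \<omega>. \<omega> \<in> Omega \<Longrightarrow> emeasure M (cyl n \<omega>) = emeasure N (cyl n \<omega>)"
  shows "M = N"
proof (rule measure_eqI_generator_eq[OF Int_stable_Cyls, of Omega _ _ "\<lambda>_. Omega"])
  have "sigma_sets Omega (insert {} Cyls) = sigma_sets Omega Cyls"
    by (rule sigma_sets_eqI) (auto intro: sigma_sets.Empty)
  then show "sets M = sigma_sets Omega (insert {} Cyls)" "sets N = sigma_sets Omega (insert {} Cyls)"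
    using assms(1,2) by simp_all
  show "emeasure M X = emeasure N X" if "X \<in> insert {} Cyls" for X
    using that assms(4) by (auto simp: Cyls_def)
qed (use assms(3) Cyls_subset_Pow Omega_in_Cyls in auto)

definition word_cyl :: "real list \<Rightarrow> (nat \<Rightarrow> real) set" where
  "word_cyl w = {\<eta> \<in> Omega. \<forall>i<length w. \<eta> i = w ! i}"

lemma cyl_eq_word_cyl: "cyl n \<omega> = word_cyl (map \<omega> [0..<n])"
  by (auto simp: cyl_def word_cyl_def)

lemma word_eq_prefix:
  assumes "set w \<subseteq> {0, 1/4}"
  obtains \<omega> where "\<omega> \<in> Omega" "w = map \<omega> [0..<length w]"
proof
  let ?\<omega> = "\<lambda>i. if i < length w then w ! i else 0"
  show "?\<omega> \<in> Omega" using assms nth_mem by (fastforce simp: Omega_iff)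
  show "w = map ?\<omega> [0..<length w]" by (simp add: nth_equalityI)
qed

lemma disjoint_word_cyl:
  assumes "length w = length v" "w \<noteq> v"
  shows "word_cyl w \<inter> word_cyl v = {}"
proof -
  obtain i where "i < length w" "w ! i \<noteq> v ! i"
    using assms nth_equalityI by blast
  with assms(1) show ?thesis by (auto simp: word_cyl_def)
qed

definition eventually_const_paths :: "real \<Rightarrow> (nat \<Rightarrow> real) set" where
  "eventually_const_paths c = {\<omega> \<in> Omega. \<exists>N. \<forall>n\<ge>N. \<omega> n = c}"

lemma N0_eq: "N0 = eventually_const_paths 0"
  and N1_eq: "N1 = eventually_const_paths (1/4)"
  by (simp_all add: N0_def N1_def eventually_const_paths_def)

lemma eventually_const_paths_subset: "eventually_const_paths c \<subseteq> Omega"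
  by (auto simp: eventually_const_paths_def)

lemma countable_eventually_const_paths: "countable (eventually_const_paths c)"
proof -
  have "eventually_const_paths c \<subseteq> (\<Union>N. (\<lambda>w n. if n < N then w ! n else c) ` words N)"
  proof
    fix \<omega> assume "\<omega> \<in> eventually_const_paths c"
    then obtain N where "\<omega> \<in> Omega" "\<forall>n\<ge>N. \<omega> n = c"
      by (auto simp: eventually_const_paths_def)
    then have "\<omega> = (\<lambda>n. if n < N then map \<omega> [0..<N] ! n else c)" "map \<omega> [0..<N] \<in> words N"
      by (auto simp: fun_eq_iff prefix_in_words)
    then show "\<omega> \<in> (\<Union>N. (\<lambda>w n. if n < N then w ! n else c) ` words N)"
      by blast
  qed
  moreover have "countable (\<Union>N. (\<lambda>w n. if n < N then w ! n else c) ` words N)"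
    by (intro countable_UN[OF countableI_type] countable_finite finite_imageI finite_words)
  ultimately show ?thesis
    by (rule countable_subset)
qed

lemma shift_eventually_const_paths_iff:
  "\<omega> \<in> Omega \<Longrightarrow> \<omega> \<circ> Suc \<in> eventually_const_paths c \<longleftrightarrow> \<omega> \<in> eventually_const_paths c"
  using eventually_sequentially_Suc[of "\<lambda>n. \<omega> n = c"]
  by (simp add: eventually_const_paths_def comp_Suc_in_Omega eventually_sequentially)

lemma disjoint_eventually_const_paths:
  assumes "c \<noteq> d"
  shows "eventually_const_paths c \<inter> eventually_const_paths d = {}"
proof -
  have False if "\<forall>n\<ge>N. \<omega> n = c" "\<forall>n\<ge>M. \<omega> n = d" for \<omega> :: "nat \<Rightarrow> real" and N M
    using that[rule_format, of "max N M"] assms by simp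
  then show ?thesis by (auto simp: eventually_const_paths_def)
qed

lemma const_in_eventually_const_paths: "c \<in> {0, 1/4} \<Longrightarrow> (\<lambda>_. c) \<in> eventually_const_paths c"
  by (auto simp: eventually_const_paths_def Omega_iff)

section \<open>The attractor\<close>

inductive_set orbit_points :: "real \<Rightarrow> real set" for lam :: real where
  zero: "0 \<in> orbit_points lam"
| tau: "s \<in> orbit_points lam \<Longrightarrow> a \<in> {0, 1/4} \<Longrightarrow> tau lam a s \<in> orbit_points lam"

lemma fold_tau_in_invariant:
  assumes "\<And>a y. a \<in> {0, 1/4} \<Longrightarrow> y \<in> X \<Longrightarrow> tau lam a y \<in> X"
  shows "x \<in> X \<Longrightarrow> set w \<subseteq> {0, 1/4} \<Longrightarrow> fold (tau lam) w x \<in> X"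
  by (induction w arbitrary: x) (simp_all add: assms)

lemma invariant_eq_fold_tau:
  assumes "X \<subseteq> tau lam 0 ` X \<union> tau lam (1/4) ` X" "x \<in> X"
  shows "\<exists>w y. set w \<subseteq> {0, 1/4} \<and> length w = n \<and> y \<in> X \<and> x = fold (tau lam) w y"
proof (induction n)
  case 0
  show ?case using assms(2) by auto
next
  case (Suc n)
  then obtain w y where "set w \<subseteq> {0, 1/4}" "length w = n" "y \<in> X" "x = fold (tau lam) w y"
    by blast
  moreover obtain a z where "a \<in> {0, 1/4}" "z \<in> X" "y = tau lam a z"
    using \<open>y \<in> X\<close> assms(1) by blast
  ultimately show ?case
    by (intro exI[of _ "a # w"] exI[of _ z]) auto
qed

lemma closure_tau_image: "closure (tau lam a ` S) = tau lam a ` closure S"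
proof -
  have *: "tau lam a ` T = (*\<^sub>R) lam ` (+) a ` T" for T
    by (simp add: image_image tau_def add.commute)
  show ?thesis by (simp only: * closure_translation closure_scaleR[symmetric])
qed

definition fixpt :: "real \<Rightarrow> real \<Rightarrow> real" where
  "fixpt lam a = lam * a / (1 - lam)"

locale ifs =
  fixes lam :: real
  assumes lam_pos: "0 < lam" and lam_less_1: "lam < 1"
begin

lemma W_tau_0: "W lam (tau lam 0 x) = (cos (2 * pi * x))\<^sup>2"
  using lam_pos by (simp add: W_def tau_def mult.assoc)

lemma W_tau_quarter: "W lam (tau lam (1/4) x) = (sin (2 * pi * x))\<^sup>2"
proof -
  have "2 * pi * tau lam (1/4) x / lam = 2 * pi * x + pi / 2"
    using lam_pos by (simp add: tau_def field_simps)
  then show ?thesis by (simp add: W_def cos_add)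
qed

lemma W_tau_sum: "W lam (tau lam 0 x) + W lam (tau lam (1/4) x) = 1"
  by (simp add: W_tau_0 W_tau_quarter)

lemma W_tau_lipschitz:
  assumes "a \<in> {0, 1/4}"
  shows "\<bar>W lam (tau lam a x) - W lam (tau lam a y)\<bar> \<le> 2 * pi * \<bar>x - y\<bar>"
proof -
  have cos: "\<bar>(cos (2 * pi * x))\<^sup>2 - (cos (2 * pi * y))\<^sup>2\<bar> \<le> 2 * pi * \<bar>x - y\<bar>"
    using abs_cos_squared_diff_le[of "2 * pi * x" "2 * pi * y"]
    by (simp add: abs_mult flip: right_diff_distrib)
  show ?thesis
  proof (cases "a = 0")
    case True
    with cos show ?thesis by (simp add: W_tau_0)
  next
    case False
    with assms have "a = 1/4" by simp
    show ?thesis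
      unfolding \<open>a = 1/4\<close> using cos by (simp add: W_tau_quarter sin_squared_eq abs_minus_commute)
  qed
qed

lemma dist_tau: "\<bar>tau lam a x - tau lam a y\<bar> = lam * \<bar>x - y\<bar>"
  using lam_pos by (simp add: tau_def abs_mult flip: right_diff_distrib)

lemma dist_fold_tau: "\<bar>fold (tau lam) w x - fold (tau lam) w y\<bar> = lam ^ length w * \<bar>x - y\<bar>"
  by (induction w arbitrary: x y) (simp_all add: dist_tau)

lemma tau_fixpt: "tau lam a (fixpt lam a) = fixpt lam a"
  using lam_less_1 by (simp add: tau_def fixpt_def field_simps)

lemma fold_tau_replicate:
  "fold (tau lam) (replicate j a) y = fixpt lam a + lam ^ j * (y - fixpt lam a)"
proof (induction j arbitrary: y)
  case (Suc j)
  have "tau lam a y - fixpt lam a = lam * (y - fixpt lam a)"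
    using tau_fixpt[of a] by (simp add: tau_def algebra_simps)
  with Suc show ?case by simp
qed simp

lemma tendsto_fold_tau_replicate: "(\<lambda>j. fold (tau lam) (replicate j a) y) \<longlonglongrightarrow> fixpt lam a"
proof -
  have "(\<lambda>j. fixpt lam a + lam ^ j * (y - fixpt lam a)) \<longlonglongrightarrow> fixpt lam a + 0 * (y - fixpt lam a)"
    using lam_pos lam_less_1 by (intro tendsto_intros LIMSEQ_power_zero) auto
  then show ?thesis by (simp only: fold_tau_replicate mult_zero_left add_0_right)
qed

lemma tendsto_fold_tau_prefix:
  assumes "\<forall>n\<ge>N. \<omega> n = a"
  shows "(\<lambda>n. fold (tau lam) (map \<omega> [0..<n]) x) \<longlonglongrightarrow> fixpt lam a"
proof (rule LIMSEQ_offset[where k = N])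
  have prefix: "map \<omega> [0..<j + N] = map \<omega> [0..<N] @ replicate j a" for j
  proof -
    have "[0..<j + N] = [0..<N] @ [N..<N + j]"
      by (simp add: add.commute upt_add_eq_append[of 0 N])
    moreover have "map \<omega> [N..<N + j] = replicate j a"
      using assms by (intro nth_equalityI) auto
    ultimately show ?thesis by simp
  qed
  show "(\<lambda>j. fold (tau lam) (map \<omega> [0..<j + N]) x) \<longlonglongrightarrow> fixpt lam a"
    unfolding prefix fold_append o_apply by (rule tendsto_fold_tau_replicate)
qed

lemma orbit_points_bounds: "s \<in> orbit_points lam \<Longrightarrow> 0 \<le> s \<and> s \<le> fixpt lam (1/4)"
proof (induction rule: orbit_points.induct)
  case zero
  then show ?case using lam_pos lam_less_1 by (simp add: fixpt_def)
next
  case (tau s a)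
  have "lam * (s + a) \<le> lam * (fixpt lam (1/4) + 1/4)"
    using tau lam_pos by (intro mult_left_mono) auto
  with tau lam_pos tau_fixpt[of "1/4"] show ?case by (auto simp: tau_def)
qed

lemma closure_orbit_points_attractor:
  "compact (closure (orbit_points lam)) \<and> closure (orbit_points lam) \<noteq> {} \<and>
   closure (orbit_points lam) = tau lam 0 ` closure (orbit_points lam) \<union> tau lam (1/4) ` closure (orbit_points lam)"
proof (intro conjI)
  have "bounded (orbit_points lam)"
    using orbit_points_bounds by (intro bounded_subset[OF bounded_closed_interval[of 0 "fixpt lam (1/4)"]]) auto
  then show "compact (closure (orbit_points lam))" by simp
  show "closure (orbit_points lam) \<noteq> {}" using orbit_points.zero by auto
  have "orbit_points lam = tau lam 0 ` orbit_points lam \<union> tau lam (1/4) ` orbit_points lam"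
  proof (intro equalityI subsetI)
    fix s assume "s \<in> orbit_points lam"
    then show "s \<in> tau lam 0 ` orbit_points lam \<union> tau lam (1/4) ` orbit_points lam"
    proof cases
      case zero
      have "0 = tau lam 0 0" by (simp add: tau_def)
      with zero show ?thesis using orbit_points.zero by blast
    qed blast
  qed (auto intro: orbit_points.tau)
  then show "closure (orbit_points lam) = tau lam 0 ` closure (orbit_points lam) \<union> tau lam (1/4) ` closure (orbit_points lam)"
    by (metis closure_Un closure_tau_image)
qed

lemma closure_orbit_points_subset:
  assumes "closed X" "X \<noteq> {}" "\<And>a y. a \<in> {0, 1/4} \<Longrightarrow> y \<in> X \<Longrightarrow> tau lam a y \<in> X"
  shows "closure (orbit_points lam) \<subseteq> X"
proof -
  obtain x0 where "x0 \<in> X" using assms(2) by blast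
  then have "fold (tau lam) (replicate j 0) x0 \<in> X" for j
    by (intro fold_tau_in_invariant assms(3)) auto
  from closed_sequentially[OF assms(1) this tendsto_fold_tau_replicate]
  have "0 \<in> X" by (simp add: fixpt_def)
  have "s \<in> X" if "s \<in> orbit_points lam" for s
    using that by induction (simp_all add: \<open>0 \<in> X\<close> assms(3))
  then show ?thesis
    using assms(1) by (intro closure_minimal) auto
qed

lemma subset_closure_orbit_points:
  assumes "bounded X" "X \<subseteq> tau lam 0 ` X \<union> tau lam (1/4) ` X"
  shows "X \<subseteq> closure (orbit_points lam)"
proof
  fix x assume "x \<in> X"
  obtain B where B: "\<And>y. y \<in> X \<Longrightarrow> \<bar>y\<bar> \<le> B"
    using assms(1) by (auto simp: bounded_iff)
  show "x \<in> closure (orbit_points lam)"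
    unfolding closure_approachable
  proof (intro allI impI)
    fix e :: real assume "0 < e"
    have "(\<lambda>n. lam ^ n * B) \<longlonglongrightarrow> 0"
      using lam_pos lam_less_1 by (intro tendsto_mult_left_zero LIMSEQ_power_zero) auto
    then have "\<forall>\<^sub>F n in sequentially. lam ^ n * B < e"
      using \<open>0 < e\<close> by (rule order_tendstoD)
    then obtain n where n: "lam ^ n * B < e"
      by (auto simp: eventually_sequentially)
    obtain w y where w: "set w \<subseteq> {0, 1/4}" "length w = n" and "y \<in> X" "x = fold (tau lam) w y"
      using invariant_eq_fold_tau[OF assms(2) \<open>x \<in> X\<close>] by blast
    then have "dist (fold (tau lam) w 0) x \<le> lam ^ n * B"
      using B lam_pos by (simp add: dist_real_def dist_fold_tau)
    moreover have "fold (tau lam) w 0 \<in> orbit_points lam"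
      using w(1) by (intro fold_tau_in_invariant orbit_points.intros) auto
    ultimately show "\<exists>s\<in>orbit_points lam. dist s x < e"
      using n by force
  qed
qed

lemma attractor_eq_closure_orbit_points:
  assumes "compact X" "X \<noteq> {}" "X = tau lam 0 ` X \<union> tau lam (1/4) ` X"
  shows "X = closure (orbit_points lam)"
proof
  show "closure (orbit_points lam) \<subseteq> X"
  proof (rule closure_orbit_points_subset)
    show "closed X" using assms(1) by (rule compact_imp_closed)
    show "tau lam a y \<in> X" if "a \<in> {0, 1/4}" "y \<in> X" for a y
      using that assms(3) by blast
  qed (rule assms(2))
  have "X \<subseteq> tau lam 0 ` X \<union> tau lam (1/4) ` X"
    using assms(3) by (rule equalityD1)
  then show "X \<subseteq> closure (orbit_points lam)"
    using compact_imp_bounded[OF assms(1)] by (intro subset_closure_orbit_points)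
qed

lemma XL_eq_closure: "XL lam = closure (orbit_points lam)"
  unfolding XL_def
  by (rule the_equality, rule closure_orbit_points_attractor, elim conjE, rule attractor_eq_closure_orbit_points)

lemma compact_XL: "compact (XL lam)"
  using closure_orbit_points_attractor by (simp add: XL_eq_closure)

lemma tau_in_XL: "a \<in> {0, 1/4} \<Longrightarrow> x \<in> XL lam \<Longrightarrow> tau lam a x \<in> XL lam"
  using closure_orbit_points_attractor unfolding XL_eq_closure by blast

lemma zero_in_XL: "0 \<in> XL lam"
  using XL_eq_closure closure_subset orbit_points.zero by blast

lemma fixpt_in_XL:
  assumes "a \<in> {0, 1/4}"
  shows "fixpt lam a \<in> XL lam"
proof -
  have "fold (tau lam) (replicate j a) 0 \<in> XL lam" for j
    using assms zero_in_XL by (intro fold_tau_in_invariant[OF tau_in_XL]) auto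
  from closed_sequentially[OF compact_imp_closed[OF compact_XL] this tendsto_fold_tau_replicate]
  show ?thesis .
qed

lemma limit_in_XL:
  fixes h :: "real \<Rightarrow> real"
  assumes "continuous_on (XL lam) h" "\<And>n. s n \<in> XL lam" "\<And>n. h (s n) = c" "s \<longlonglongrightarrow> l"
  shows "l \<in> XL lam" "h l = c"
proof -
  show "l \<in> XL lam"
    using closed_sequentially[OF compact_imp_closed[OF compact_XL] assms(2,4)] .
  then have "(\<lambda>n. h (s n)) \<longlonglongrightarrow> h l"
    using continuous_on_tendsto_compose[OF assms(1) assms(4)] assms(2) by simp
  then have "(\<lambda>n. c) \<longlonglongrightarrow> h l"
    using assms(3) by simp
  from LIMSEQ_unique[OF this tendsto_const] show "h l = c" .
qed

lemma sum_word_weight: "(\<Sum>w\<in>words n. word_weight lam x w) = 1"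
  by (induction n arbitrary: x)
    (simp_all add: words_0 sum_words_Suc W_tau_sum flip: sum_distrib_left)

lemma sum_word_weight_lipschitz:
  "(\<Sum>w\<in>words n. \<bar>word_weight lam x w - word_weight lam y w\<bar>) \<le> 4 * pi / (1 - lam) * \<bar>x - y\<bar>"
proof (induction n arbitrary: x y)
  case 0
  then show ?case using lam_less_1 by (simp add: words_0)
next
  case (Suc n)
  let ?K = "4 * pi / (1 - lam)" and ?d = "\<bar>x - y\<bar>"
  have step: "(\<Sum>w\<in>words n. \<bar>W lam (tau lam a x) * word_weight lam (tau lam a x) w
                 - W lam (tau lam a y) * word_weight lam (tau lam a y) w\<bar>)
      \<le> W lam (tau lam a x) * (?K * lam * ?d) + 2 * pi * ?d" if a: "a \<in> {0, 1/4}" for a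
  proof -
    have "(\<Sum>w\<in>words n. \<bar>W lam (tau lam a x) * word_weight lam (tau lam a x) w
                 - W lam (tau lam a y) * word_weight lam (tau lam a y) w\<bar>)
        \<le> W lam (tau lam a x) * (\<Sum>w\<in>words n. \<bar>word_weight lam (tau lam a x) w - word_weight lam (tau lam a y) w\<bar>)
          + \<bar>W lam (tau lam a x) - W lam (tau lam a y)\<bar> * (\<Sum>w\<in>words n. word_weight lam (tau lam a y) w)"
      by (rule sum_abs_diff_mult_le) (simp_all add: W_nonneg word_weight_nonneg)
    also have "\<dots> \<le> W lam (tau lam a x) * (?K * \<bar>tau lam a x - tau lam a y\<bar>) + 2 * pi * ?d"
      using Suc.IH W_tau_lipschitz[OF a]
      by (intro add_mono mult_left_mono) (simp_all add: sum_word_weight W_nonneg)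
    finally show ?thesis by (simp add: dist_tau mult.assoc)
  qed
  have "(\<Sum>w\<in>words (Suc n). \<bar>word_weight lam x w - word_weight lam y w\<bar>)
      \<le> (W lam (tau lam 0 x) * (?K * lam * ?d) + 2 * pi * ?d) + (W lam (tau lam (1/4) x) * (?K * lam * ?d) + 2 * pi * ?d)"
    unfolding sum_words_Suc word_weight.simps by (intro add_mono step) auto
  also have "\<dots> = (W lam (tau lam 0 x) + W lam (tau lam (1/4) x)) * ?K * lam * ?d + 4 * pi * ?d"
    by (simp add: algebra_simps)
  also have "\<dots> = ?K * ?d"
    using lam_less_1 by (simp add: W_tau_sum field_simps)
  finally show ?case .
qed

end

section \<open>Construction of the path measures\<close>

definition is_path_measure :: "real \<Rightarrow> real \<Rightarrow> (nat \<Rightarrow> real) measure \<Rightarrow> bool" where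
  "is_path_measure lam x M \<longleftrightarrow> prob_space M \<and> space M = Omega \<and> sets M = sigma_sets Omega Cyls \<and>
     (\<forall>n. \<forall>\<omega>\<in>Omega. emeasure M (cyl n \<omega>) = ennreal (word_weight lam x (map \<omega> [0..<n])))"

lemma Px_eq_The: "Px lam x = (THE M. is_path_measure lam x M)"
  unfolding Px_def is_path_measure_def prod_orbit_eq_word_weight ..

lemma is_path_measure_unique:
  assumes "is_path_measure lam x M" "is_path_measure lam x N"
  shows "M = N"
proof (rule measure_eqI_cylinders)
  interpret prob_space M using assms(1) by (simp add: is_path_measure_def)
  show "emeasure M Omega \<noteq> \<infinity>" using assms(1) by (simp add: is_path_measure_def flip: emeasure_space_1)
qed (use assms in \<open>auto simp: is_path_measure_def\<close>)

(* A point u of [0,1) is expanded into digits using the partition of [0,1) into [0, W(tau_0 x))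
   and [W(tau_0 x), 1), rescaling the chosen piece back to [0,1). The points whose expansion
   starts with a word w form an interval of length word_weight lam x w, so the expansion pushes
   Lebesgue measure forward to P_x. A digit whose piece has length 0 is never chosen, so the
   division by zero in digits is harmless. *)

definition first_digit :: "real \<Rightarrow> real \<Rightarrow> real \<Rightarrow> real" where
  "first_digit lam x u = (if u < W lam (tau lam 0 x) then 0 else 1/4)"

definition digit_offset :: "real \<Rightarrow> real \<Rightarrow> real \<Rightarrow> real" where
  "digit_offset lam x a = (if a = 0 then 0 else W lam (tau lam 0 x))"

fun digits :: "real \<Rightarrow> real \<Rightarrow> real \<Rightarrow> nat \<Rightarrow> real" where
  "digits lam x u 0 = first_digit lam x u"
| "digits lam x u (Suc k) = (let a = first_digit lam x u in
     digits lam (tau lam a x) ((u - digit_offset lam x a) / W lam (tau lam a x)) k)"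

fun word_start :: "real \<Rightarrow> real \<Rightarrow> real list \<Rightarrow> real" where
  "word_start lam x [] = 0"
| "word_start lam x (a # w) = digit_offset lam x a + W lam (tau lam a x) * word_start lam (tau lam a x) w"

lemma digits_in_Omega: "digits lam x u \<in> Omega"
proof -
  have "digits lam x u k \<in> {0, 1/4}" for k
    by (induction k arbitrary: x u) (simp_all add: first_digit_def Let_def)
  then show ?thesis by (simp add: Omega_iff)
qed

lemma rescale_mem_Ico_iff:
  fixes c s t u off :: real
  assumes "0 \<le> c" "0 \<le> s" "t \<le> 1"
  shows "off \<le> u \<and> u < off + c \<and> (u - off) / c \<in> {s..<t} \<longleftrightarrow> u \<in> {off + c * s ..< off + c * t}"
proof (cases "c = 0")
  case False
  with assms have "0 < c" by simp
  have "(u - off) / c \<in> {s..<t} \<longleftrightarrow> u \<in> {off + c * s ..< off + c * t}"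
    using \<open>0 < c\<close> by (simp add: pos_le_divide_eq pos_divide_less_eq algebra_simps)
  moreover have "0 \<le> c * s" "c * t \<le> c"
    using assms \<open>0 < c\<close> by (simp_all add: mult_left_le)
  ultimately show ?thesis
    by auto
qed simp

lemma prob_space_unit_interval: "prob_space (restrict_space lborel {0..<1::real})"
  and emeasure_unit_interval_Ico:
    "0 \<le> a \<Longrightarrow> a \<le> b \<Longrightarrow> b \<le> 1 \<Longrightarrow> emeasure (restrict_space lborel {0..<1}) {a..<b} = ennreal (b - a)"
proof -
  show "emeasure (restrict_space lborel {0..<1}) {a..<b} = ennreal (b - a)"
    if "0 \<le> a" "a \<le> b" "b \<le> 1" for a b :: real
    using that by (subst emeasure_restrict_space) auto
  from this[of 0 1] show "prob_space (restrict_space lborel {0..<1::real})"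
    by (intro prob_spaceI) simp
qed

context ifs
begin

lemma digit_interval:
  assumes "a \<in> {0, 1/4}"
  shows "0 \<le> digit_offset lam x a" "digit_offset lam x a + W lam (tau lam a x) \<le> 1"
    and "0 \<le> u \<Longrightarrow> u < 1 \<Longrightarrow>
      first_digit lam x u = a \<longleftrightarrow> digit_offset lam x a \<le> u \<and> u < digit_offset lam x a + W lam (tau lam a x)"
  using assms W_tau_sum[of x] W_nonneg[of lam "tau lam 0 x"] W_nonneg[of lam "tau lam (1/4) x"]
  by (auto simp: digit_offset_def first_digit_def simp del: eq_divide_eq_numeral1)

lemma word_start_bounds:
  "set w \<subseteq> {0, 1/4} \<Longrightarrow> 0 \<le> word_start lam x w \<and> word_start lam x w + word_weight lam x w \<le> 1"
proof (induction w arbitrary: x)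
  case (Cons a w)
  let ?c = "W lam (tau lam a x)"
  have "?c * (word_start lam (tau lam a x) w + word_weight lam (tau lam a x) w) \<le> ?c"
    using Cons by (intro mult_left_le) (auto simp: W_nonneg)
  with Cons digit_interval[of a x] show ?case by (auto simp: W_nonneg algebra_simps)
qed simp

lemma digits_preimage:
  assumes "set w \<subseteq> {0, 1/4}"
  shows "{u \<in> {0..<1}. \<forall>i<length w. digits lam x u i = w ! i}
       = {word_start lam x w ..< word_start lam x w + word_weight lam x w}"
  using assms
proof (induction w arbitrary: x)
  case (Cons a w)
  define y where "y = tau lam a x"
  define off where "off = digit_offset lam x a"
  define c where "c = W lam y"
  let ?s = "word_start lam y w" and ?p = "word_weight lam y w"
  have a: "a \<in> {0, 1/4}" and IH: "{v \<in> {0..<1}. \<forall>i<length w. digits lam y v i = w ! i} = {?s..<?s + ?p}"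
    using Cons by auto
  have off: "0 \<le> off" "off + c \<le> 1" and c: "0 \<le> c"
    using digit_interval[OF a, of x] by (simp_all add: off_def c_def y_def W_nonneg)
  have sp: "0 \<le> ?s" "?s + ?p \<le> 1"
    using word_start_bounds Cons.prems by auto
  have "u \<in> {u \<in> {0..<1}. \<forall>i<length (a # w). digits lam x u i = (a # w) ! i}
      \<longleftrightarrow> 0 \<le> u \<and> u < 1 \<and> first_digit lam x u = a
          \<and> (\<forall>i<length w. digits lam y ((u - off) / c) i = w ! i)" for u
    by (auto simp: All_less_Suc2 y_def off_def c_def Let_def)
  also have "\<dots> u \<longleftrightarrow> off \<le> u \<and> u < off + c \<and> (u - off) / c \<in> {v \<in> {0..<1}. \<forall>i<length w. digits lam y v i = w ! i}" for u
    using off c digit_interval(3)[OF a, of u x]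
    by (auto simp: off_def c_def y_def divide_simps)
  also have "\<dots> u \<longleftrightarrow> u \<in> {off + c * ?s ..< off + c * (?s + ?p)}" for u
    unfolding IH using c sp by (rule rescale_mem_Ico_iff)
  finally show ?case
    by (auto simp: y_def off_def c_def algebra_simps)
qed auto

lemma digits_preimage_cyl:
  assumes "\<omega> \<in> Omega"
  shows "digits lam x -` cyl n \<omega> \<inter> {0..<1}
      = {word_start lam x (map \<omega> [0..<n]) ..< word_start lam x (map \<omega> [0..<n]) + word_weight lam x (map \<omega> [0..<n])}"
proof -
  have "digits lam x -` cyl n \<omega> \<inter> {0..<1} = {u \<in> {0..<1}. \<forall>i<n. digits lam x u i = \<omega> i}"
    using digits_in_Omega by (auto simp: cyl_def)
  then show ?thesis
    using digits_preimage[OF set_prefix_subset[OF assms, of n], of x] by simp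
qed

lemma measurable_digits: "digits lam x \<in> restrict_space lborel {0..<1} \<rightarrow>\<^sub>M sigma Omega Cyls"
proof (rule measurable_sigma_sets[OF sets_measure_of[OF Cyls_subset_Pow] Cyls_subset_Pow])
  show "digits lam x \<in> space (restrict_space lborel {0..<1}) \<rightarrow> Omega"
    using digits_in_Omega by blast
  fix A assume "A \<in> Cyls"
  then obtain n \<omega> where "A = cyl n \<omega>" "\<omega> \<in> Omega" by (auto simp: Cyls_def)
  with word_start_bounds[OF set_prefix_subset[of \<omega> n], of x]
  show "digits lam x -` A \<inter> space (restrict_space lborel {0..<1}) \<in> sets (restrict_space lborel {0..<1})"
    by (simp add: digits_preimage_cyl sets_restrict_space_iff)
qed

lemma is_path_measure_distr_digits:
  "is_path_measure lam x (distr (restrict_space lborel {0..<1}) (sigma Omega Cyls) (digits lam x))"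
  unfolding is_path_measure_def
proof (intro conjI allI ballI)
  show "prob_space (distr (restrict_space lborel {0..<1}) (sigma Omega Cyls) (digits lam x))"
    using prob_space_unit_interval measurable_digits by (rule prob_space.prob_space_distr)
  fix n \<omega> assume "\<omega> \<in> Omega"
  then show "emeasure (distr (restrict_space lborel {0..<1}) (sigma Omega Cyls) (digits lam x)) (cyl n \<omega>)
      = ennreal (word_weight lam x (map \<omega> [0..<n]))"
    using word_start_bounds[OF set_prefix_subset[of \<omega> n], of x] word_weight_nonneg[of lam x "map \<omega> [0..<n]"]
    by (simp add: emeasure_distr[OF measurable_digits] sets_measure_of[OF Cyls_subset_Pow]
        cyl_in_sigma_sets digits_preimage_cyl emeasure_unit_interval_Ico)
qed (simp_all add: Cyls_subset_Pow)

lemma is_path_measure_Px: "is_path_measure lam x (Px lam x)"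
proof -
  have "\<exists>!M. is_path_measure lam x M"
    using is_path_measure_distr_digits is_path_measure_unique by blast
  then show ?thesis unfolding Px_eq_The by (rule theI')
qed

lemma prob_space_Px: "prob_space (Px lam x)"
  and space_Px: "space (Px lam x) = Omega"
  and sets_Px: "sets (Px lam x) = sigma_sets Omega Cyls"
  and emeasure_Px_cyl: "\<omega> \<in> Omega \<Longrightarrow> emeasure (Px lam x) (cyl n \<omega>) = ennreal (word_weight lam x (map \<omega> [0..<n]))"
  using is_path_measure_Px by (simp_all add: is_path_measure_def)

lemma cyl_in_sets_Px: "\<omega> \<in> Omega \<Longrightarrow> cyl n \<omega> \<in> sets (Px lam x)"
  by (simp add: sets_Px cyl_in_sigma_sets)

lemma measure_Px_cyl: "\<omega> \<in> Omega \<Longrightarrow> measure (Px lam x) (cyl n \<omega>) = word_weight lam x (map \<omega> [0..<n])"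
  by (simp add: measure_def emeasure_Px_cyl word_weight_nonneg)

lemma measure_Px_word_cyl:
  assumes "set w \<subseteq> {0, 1/4}"
  shows "word_cyl w \<in> sets (Px lam x)" "measure (Px lam x) (word_cyl w) = word_weight lam x w"
proof -
  obtain \<omega> where \<omega>: "\<omega> \<in> Omega" and w: "w = map \<omega> [0..<length w]"
    using assms by (rule word_eq_prefix)
  then have "word_cyl w = cyl (length w) \<omega>"
    by (simp add: cyl_eq_word_cyl)
  with \<omega> w show "word_cyl w \<in> sets (Px lam x)" "measure (Px lam x) (word_cyl w) = word_weight lam x w"
    by (simp_all add: cyl_in_sets_Px measure_Px_cyl)
qed

lemma measure_Px_singleton_limit:
  assumes "\<omega> \<in> Omega"
  shows "(\<lambda>n. word_weight lam x (map \<omega> [0..<n])) \<longlonglongrightarrow> measure (Px lam x) {\<omega>}"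
proof -
  interpret prob_space "Px lam x" by (rule prob_space_Px)
  have "(\<lambda>n. measure (Px lam x) (cyl n \<omega>)) \<longlonglongrightarrow> measure (Px lam x) (\<Inter>n. cyl n \<omega>)"
    using assms cyl_Suc_subset by (intro finite_Lim_measure_decseq decseq_SucI) (auto simp: cyl_in_sets_Px)
  then show ?thesis
    using assms by (simp add: measure_Px_cyl flip: singleton_eq_INT_cyl)
qed

lemma countable_in_sets_Px:
  assumes "countable E" "E \<subseteq> Omega"
  shows "E \<in> sets (Px lam x)"
proof (rule sets.countable[OF _ assms(1)])
  fix \<omega> assume "\<omega> \<in> E"
  with assms(2) have "\<omega> \<in> Omega" by blast
  then have "{\<omega>} = (\<Inter>n. cyl n \<omega>)"
    by (rule singleton_eq_INT_cyl)
  with \<open>\<omega> \<in> Omega\<close> show "{\<omega>} \<in> sets (Px lam x)"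
    by (auto intro: cyl_in_sets_Px)
qed

lemma word_weight_pos_if_atom:
  assumes "\<omega> \<in> Omega" "emeasure (Px lam x) {\<omega>} \<noteq> 0"
  shows "0 < word_weight lam x (map \<omega> [0..<n])"
proof -
  have "0 < emeasure (Px lam x) {\<omega>}"
    using assms(2) by (simp add: zero_less_iff_neq_zero)
  also have "\<dots> \<le> emeasure (Px lam x) (cyl n \<omega>)"
    using assms(1) by (intro emeasure_mono cyl_in_sets_Px) (simp_all add: cyl_def)
  also have "\<dots> = ennreal (word_weight lam x (map \<omega> [0..<n]))"
    using assms(1) by (rule emeasure_Px_cyl)
  finally show ?thesis by simp
qed

end

section \<open>Continuity and harmonicity of hitting probabilities\<close>

context ifs
begin

lemma measure_Px_UN_cyl:
  assumes "finite F" "F \<subseteq> Omega"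
  shows "measure (Px lam x) (\<Union>\<omega>\<in>F. cyl n \<omega>) = (\<Sum>w\<in>(\<lambda>\<omega>. map \<omega> [0..<n]) ` F. word_weight lam x w)"
proof -
  interpret prob_space "Px lam x" by (rule prob_space_Px)
  let ?S = "(\<lambda>\<omega>. map \<omega> [0..<n]) ` F"
  have S: "?S \<subseteq> words n"
    using assms(2) prefix_in_words by auto
  have "(\<Union>\<omega>\<in>F. cyl n \<omega>) = (\<Union>w\<in>?S. word_cyl w)"
    by (simp add: cyl_eq_word_cyl)
  also have "measure (Px lam x) \<dots> = (\<Sum>w\<in>?S. measure (Px lam x) (word_cyl w))"
    using S assms(1)
    by (intro finite_measure_finite_Union)
      (auto simp: words_def disjoint_family_on_def intro!: measure_Px_word_cyl disjoint_word_cyl)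
  also have "\<dots> = (\<Sum>w\<in>?S. word_weight lam x w)"
    by (intro sum.cong refl measure_Px_word_cyl(2)) (use S in \<open>auto simp: words_def\<close>)
  finally show ?thesis .
qed

lemma measure_Px_finite_lipschitz:
  assumes "finite F" "F \<subseteq> Omega"
  shows "\<bar>measure (Px lam x) F - measure (Px lam y) F\<bar> \<le> 4 * pi / (1 - lam) * \<bar>x - y\<bar>"
proof -
  let ?G = "\<lambda>n. \<Union>\<omega>\<in>F. cyl n \<omega>" and ?S = "\<lambda>n. (\<lambda>\<omega>. map \<omega> [0..<n]) ` F"
  have limit: "(\<lambda>n. measure (Px lam z) (?G n)) \<longlonglongrightarrow> measure (Px lam z) F" for z
  proof -
    interpret prob_space "Px lam z" by (rule prob_space_Px)
    have G_sets: "range ?G \<subseteq> sets (Px lam z)"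
      using assms by (auto intro!: cyl_in_sets_Px)
    have "decseq ?G"
      by (intro decseq_SucI UN_mono order_refl cyl_Suc_subset)
    then show ?thesis
      using finite_Lim_measure_decseq[OF G_sets] by (simp add: INT_UN_cyl_eq[OF assms])
  qed
  have "\<bar>measure (Px lam x) (?G n) - measure (Px lam y) (?G n)\<bar> \<le> 4 * pi / (1 - lam) * \<bar>x - y\<bar>" for n
  proof -
    have "\<bar>measure (Px lam x) (?G n) - measure (Px lam y) (?G n)\<bar>
        = \<bar>\<Sum>w\<in>?S n. word_weight lam x w - word_weight lam y w\<bar>"
      using assms by (simp add: measure_Px_UN_cyl sum_subtractf)
    also have "\<dots> \<le> (\<Sum>w\<in>?S n. \<bar>word_weight lam x w - word_weight lam y w\<bar>)"
      by (rule sum_abs)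
    also have "\<dots> \<le> (\<Sum>w\<in>words n. \<bar>word_weight lam x w - word_weight lam y w\<bar>)"
      using assms(2) prefix_in_words by (intro sum_mono2 finite_words) auto
    also have "\<dots> \<le> 4 * pi / (1 - lam) * \<bar>x - y\<bar>"
      by (rule sum_word_weight_lipschitz)
    finally show ?thesis .
  qed
  then show ?thesis
    by (rule abs_diff_le_of_tendsto[OF limit limit])
qed

lemma measure_Px_countable_lipschitz:
  assumes "countable E" "E \<subseteq> Omega"
  shows "\<bar>measure (Px lam x) E - measure (Px lam y) E\<bar> \<le> 4 * pi / (1 - lam) * \<bar>x - y\<bar>"
proof (cases "E = {}")
  case True
  then show ?thesis using lam_less_1 by simp
next
  case False
  define F where "F k = from_nat_into E ` {..<k}" for k
  have F: "finite (F k)" "F k \<subseteq> E" for k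
    using from_nat_into[OF False] by (auto simp: F_def)
  have UN: "(\<Union>k. F k) = E"
    unfolding F_def image_UN[symmetric] UN_lessThan_UNIV using False assms(1) by simp
  have F_sets: "range F \<subseteq> sets (Px lam z)" and "incseq F" for z
    using F assms countable_finite by (auto simp: incseq_def F_def intro!: countable_in_sets_Px)
  have limit: "(\<lambda>k. measure (Px lam z) (F k)) \<longlonglongrightarrow> measure (Px lam z) E" for z
  proof -
    interpret prob_space "Px lam z" by (rule prob_space_Px)
    show ?thesis
      using finite_Lim_measure_incseq[OF F_sets \<open>incseq F\<close>] by (simp add: UN)
  qed
  show ?thesis
    using F assms(2) by (intro abs_diff_le_of_tendsto[OF limit limit] measure_Px_finite_lipschitz) auto
qed

lemma continuous_on_measure_Px:
  assumes "countable E" "E \<subseteq> Omega"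
  shows "continuous_on S (\<lambda>y. measure (Px lam y) E)"
proof (rule lipschitz_on_continuous_on)
  show "(4 * pi / (1 - lam))-lipschitz_on S (\<lambda>y. measure (Px lam y) E)"
    using measure_Px_countable_lipschitz[OF assms] lam_less_1
    by (intro lipschitz_onI) (auto simp: dist_real_def)
qed

lemma measurable_shift_Px: "(\<lambda>\<omega>. \<omega> \<circ> Suc) \<in> Px lam x \<rightarrow>\<^sub>M Px lam y"
proof (rule measurable_sigma_sets[OF sets_Px Cyls_subset_Pow])
  show "(\<lambda>\<omega>. \<omega> \<circ> Suc) \<in> space (Px lam x) \<rightarrow> Omega"
    using comp_Suc_in_Omega by (auto simp: space_Px)
  fix B assume "B \<in> Cyls"
  then obtain n \<eta> where B: "B = cyl n \<eta>" "\<eta> \<in> Omega" by (auto simp: Cyls_def)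
  have "(\<lambda>\<omega>. \<omega> \<circ> Suc) -` B \<inter> space (Px lam x) = cyl (Suc n) (case_nat 0 \<eta>) \<union> cyl (Suc n) (case_nat (1/4) \<eta>)"
    using B by (auto simp: space_Px cyl_def All_less_Suc2 Omega_iff comp_Suc_in_Omega simp del: eq_divide_eq_numeral1)
  then show "(\<lambda>\<omega>. \<omega> \<circ> Suc) -` B \<inter> space (Px lam x) \<in> sets (Px lam x)"
    using B by (auto intro!: cyl_in_sets_Px case_nat_in_Omega)
qed

lemma first_step_in_sets_Px:
  assumes "a \<in> {0, 1/4}" "B \<in> sigma_sets Omega Cyls"
  shows "{\<omega> \<in> Omega. \<omega> 0 = a \<and> \<omega> \<circ> Suc \<in> B} \<in> sets (Px lam x)"
proof -
  have "{\<omega> \<in> Omega. \<omega> 0 = a \<and> \<omega> \<circ> Suc \<in> B} = cyl 1 (\<lambda>_. a) \<inter> ((\<lambda>\<omega>. \<omega> \<circ> Suc) -` B \<inter> space (Px lam x))"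
    by (auto simp: cyl_def space_Px)
  also have "\<dots> \<in> sets (Px lam x)"
  proof (rule sets.Int)
    show "cyl 1 (\<lambda>_. a) \<in> sets (Px lam x)"
      using assms(1) by (intro cyl_in_sets_Px) (simp add: Omega_iff)
    show "(\<lambda>\<omega>. \<omega> \<circ> Suc) -` B \<inter> space (Px lam x) \<in> sets (Px lam x)"
      using assms(2) by (intro measurable_sets[OF measurable_shift_Px[of x x]]) (simp add: sets_Px)
  qed
  finally show ?thesis .
qed

lemma emeasure_distr_shift_first_step:
  assumes "a \<in> {0, 1/4}" "X \<in> sigma_sets Omega Cyls"
  shows "emeasure (distr (density (Px lam x) (indicator (cyl 1 (\<lambda>_. a)))) (Px lam y) (\<lambda>\<omega>. \<omega> \<circ> Suc)) X
       = emeasure (Px lam x) {\<omega> \<in> Omega. \<omega> 0 = a \<and> \<omega> \<circ> Suc \<in> X}"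
proof -
  let ?C = "cyl 1 (\<lambda>_. a)"
  have "?C \<in> sets (Px lam x)"
    using assms(1) by (auto simp: Omega_iff intro!: cyl_in_sets_Px)
  have "emeasure (distr (density (Px lam x) (indicator ?C)) (Px lam y) (\<lambda>\<omega>. \<omega> \<circ> Suc)) X
      = emeasure (density (Px lam x) (indicator ?C)) ((\<lambda>\<omega>. \<omega> \<circ> Suc) -` X \<inter> Omega)"
    using assms(2) measurable_shift_Px
    by (subst emeasure_distr) (auto simp: sets_Px space_Px measurable_cong_sets[OF sets_density refl])
  also have "\<dots> = emeasure (Px lam x) (?C \<inter> ((\<lambda>\<omega>. \<omega> \<circ> Suc) -` X \<inter> Omega))"
    using \<open>?C \<in> sets (Px lam x)\<close> assms(2) measurable_sets[OF measurable_shift_Px, of X x y]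
    by (intro emeasure_restricted) (auto simp: sets_Px space_Px)
  also have "?C \<inter> ((\<lambda>\<omega>. \<omega> \<circ> Suc) -` X \<inter> Omega) = {\<omega> \<in> Omega. \<omega> 0 = a \<and> \<omega> \<circ> Suc \<in> X}"
    by (auto simp: cyl_def)
  finally show ?thesis .
qed

lemma emeasure_Px_first_step:
  assumes a: "a \<in> {0, 1/4}" and B: "B \<in> sigma_sets Omega Cyls"
  shows "emeasure (Px lam x) {\<omega> \<in> Omega. \<omega> 0 = a \<and> \<omega> \<circ> Suc \<in> B}
       = W lam (tau lam a x) * emeasure (Px lam (tau lam a x)) B"
proof -
  interpret prob_space "Px lam x" by (rule prob_space_Px)
  define y where "y = tau lam a x"
  define \<mu> where "\<mu> = distr (density (Px lam x) (indicator (cyl 1 (\<lambda>_. a)))) (Px lam y) (\<lambda>\<omega>. \<omega> \<circ> Suc)"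
  define \<nu> where "\<nu> = scale_measure (ennreal (W lam y)) (Px lam y)"
  note \<mu> = emeasure_distr_shift_first_step[OF a, of _ x y, folded \<mu>_def]
  have "\<mu> = \<nu>"
  proof (rule measure_eqI_cylinders)
    show "sets \<mu> = sigma_sets Omega Cyls" "sets \<nu> = sigma_sets Omega Cyls"
      by (simp_all add: \<mu>_def \<nu>_def sets_Px)
    show "emeasure \<mu> Omega \<noteq> \<infinity>"
      using \<mu>[of Omega] Omega_in_Cyls by simp
    fix n \<eta> assume \<eta>: "\<eta> \<in> Omega"
    have "{\<omega> \<in> Omega. \<omega> 0 = a \<and> \<omega> \<circ> Suc \<in> cyl n \<eta>} = cyl (Suc n) (case_nat a \<eta>)"
      by (auto simp: cyl_def All_less_Suc2 comp_Suc_in_Omega)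
    then have "emeasure \<mu> (cyl n \<eta>) = ennreal (word_weight lam x (map (case_nat a \<eta>) [0..<Suc n]))"
      using \<eta> a by (simp add: \<mu> cyl_in_sigma_sets emeasure_Px_cyl case_nat_in_Omega)
    also have "\<dots> = ennreal (W lam y) * ennreal (word_weight lam y (map \<eta> [0..<n]))"
      by (simp add: map_upt_Suc y_def ennreal_mult W_nonneg word_weight_nonneg del: upt_Suc)
    also have "\<dots> = emeasure \<nu> (cyl n \<eta>)"
      using \<eta> by (simp add: \<nu>_def emeasure_Px_cyl)
    finally show "emeasure \<mu> (cyl n \<eta>) = emeasure \<nu> (cyl n \<eta>)" .
  qed
  then show ?thesis
    using \<mu>[OF B] B by (simp add: \<nu>_def y_def sets_Px)
qed

lemma RW_measure_Px:
  assumes E: "E \<in> sigma_sets Omega Cyls"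
    and shift: "\<And>\<omega>. \<omega> \<in> Omega \<Longrightarrow> \<omega> \<circ> Suc \<in> E \<longleftrightarrow> \<omega> \<in> E"
  shows "RW lam (\<lambda>y. measure (Px lam y) E) x = measure (Px lam x) E"
proof -
  interpret prob_space "Px lam x" by (rule prob_space_Px)
  define D where "D a = {\<omega> \<in> Omega. \<omega> 0 = a \<and> \<omega> \<circ> Suc \<in> E}" for a :: real
  have "E \<subseteq> Omega"
    using sigma_sets_into_sp[OF Cyls_subset_Pow E] .
  then have "E = D 0 \<union> D (1/4)"
    using shift Omega_digit by (auto simp: D_def)
  moreover have "D a \<in> sets (Px lam x)" if "a \<in> {0, 1/4}" for a
    unfolding D_def using that E by (rule first_step_in_sets_Px)
  moreover have "D 0 \<inter> D (1/4) = {}"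
    by (auto simp: D_def)
  ultimately have "measure (Px lam x) E = measure (Px lam x) (D 0) + measure (Px lam x) (D (1/4))"
    by (simp add: finite_measure_Union)
  moreover have "measure (Px lam x) (D a) = W lam (tau lam a x) * measure (Px lam (tau lam a x)) E"
    if "a \<in> {0, 1/4}" for a
  proof -
    interpret Py: prob_space "Px lam (tau lam a x)" by (rule prob_space_Px)
    have "ennreal (measure (Px lam x) (D a)) = ennreal (W lam (tau lam a x) * measure (Px lam (tau lam a x)) E)"
      using emeasure_Px_first_step[OF that E, of x]
      by (simp add: D_def emeasure_eq_measure Py.emeasure_eq_measure W_nonneg ennreal_mult)
    then show ?thesis
      by (subst (asm) ennreal_inj) (auto simp: W_nonneg)
  qed
  ultimately show ?thesis
    by (simp add: RW_def)
qed

end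

section \<open>The minimum principle\<close>

context ifs
begin

lemma harmonic_min_step:
  assumes harmonic: "\<forall>y\<in>XL lam. RW lam h y = h y" and min: "\<forall>y\<in>XL lam. h x \<le> h y"
    and x: "x \<in> XL lam" and a: "a \<in> {0, 1/4}" and pos: "0 < W lam (tau lam a x)"
  shows "h (tau lam a x) = h x"
proof -
  let ?W0 = "W lam (tau lam 0 x)" and ?W1 = "W lam (tau lam (1/4) x)"
  have "?W0 * h (tau lam 0 x) + ?W1 * h (tau lam (1/4) x) = h x"
    using harmonic x by (simp add: RW_def)
  moreover have "?W0 * h x + ?W1 * h x = h x"
    by (simp add: W_tau_sum flip: distrib_right)
  ultimately have "?W0 * (h (tau lam 0 x) - h x) + ?W1 * (h (tau lam (1/4) x) - h x) = 0"
    unfolding right_diff_distrib by linarith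
  moreover have "0 \<le> ?W0 * (h (tau lam 0 x) - h x)" "0 \<le> ?W1 * (h (tau lam (1/4) x) - h x)"
    using min tau_in_XL[OF _ x] W_nonneg by simp_all
  ultimately have "?W0 * (h (tau lam 0 x) - h x) = 0 \<and> ?W1 * (h (tau lam (1/4) x) - h x) = 0"
    by linarith
  then have "W lam (tau lam a x) * (h (tau lam a x) - h x) = 0"
    using a by (auto simp del: eq_divide_eq_numeral1)
  with pos show ?thesis by simp
qed

lemma harmonic_min_along_word:
  assumes harmonic: "\<forall>y\<in>XL lam. RW lam h y = h y"
  shows "x \<in> XL lam \<Longrightarrow> \<forall>y\<in>XL lam. h x \<le> h y \<Longrightarrow> set w \<subseteq> {0, 1/4} \<Longrightarrow> 0 < word_weight lam x w
    \<Longrightarrow> fold (tau lam) w x \<in> XL lam \<and> h (fold (tau lam) w x) = h x"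
proof (induction w arbitrary: x)
  case (Cons a w)
  have a: "a \<in> {0, 1/4}" using Cons.prems(3) by simp
  have pos: "0 < W lam (tau lam a x)" "0 < word_weight lam (tau lam a x) w"
    using Cons.prems(4) W_nonneg[of lam "tau lam a x"] word_weight_nonneg[of lam "tau lam a x" w]
    by (auto simp: zero_less_mult_iff)
  have "h (tau lam a x) = h x"
    using harmonic Cons.prems(2) Cons.prems(1) a pos(1) by (rule harmonic_min_step)
  moreover have "tau lam a x \<in> XL lam"
    using a Cons.prems(1) by (rule tau_in_XL)
  ultimately show ?case
    using Cons.IH[of "tau lam a x"] Cons.prems pos(2) by simp
qed simp

lemma measure_Px_const_path:
  assumes "a \<in> {0, 1/4}" "W lam (tau lam a (fixpt lam a)) = 1"
  shows "measure (Px lam (fixpt lam a)) {\<lambda>_. a} = 1"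
proof -
  have "W lam (fixpt lam a) = 1"
    using assms(2) by (simp add: tau_fixpt)
  then have "word_weight lam (fixpt lam a) (replicate n a) = 1" for n
    by (induction n) (simp_all add: tau_fixpt)
  moreover have "(\<lambda>_. a) \<in> Omega"
    using assms(1) by (simp add: Omega_iff)
  ultimately have "(\<lambda>n. 1) \<longlonglongrightarrow> measure (Px lam (fixpt lam a)) {\<lambda>_. a}"
    using measure_Px_singleton_limit[of "\<lambda>_. a" "fixpt lam a"] by (simp add: map_replicate_const)
  then show ?thesis
    by (simp add: LIMSEQ_const_iff)
qed

lemma measure_Px_fixpt_eq_1:
  assumes "a \<in> {0, 1/4}" "W lam (tau lam a (fixpt lam a)) = 1"
    and "countable E" "E \<subseteq> Omega" "(\<lambda>_. a) \<in> E"
  shows "measure (Px lam (fixpt lam a)) E = 1"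
proof -
  interpret prob_space "Px lam (fixpt lam a)" by (rule prob_space_Px)
  have "measure (Px lam (fixpt lam a)) {\<lambda>_. a} \<le> measure (Px lam (fixpt lam a)) E"
    using assms(3-5) by (intro finite_measure_mono countable_in_sets_Px) auto
  then show ?thesis
    using measure_Px_const_path[OF assms(1,2)] prob_le_1[of E] by linarith
qed

lemma measure_Px_eq_1_on_XL:
  assumes E: "countable E" "E \<subseteq> Omega"
    and shift: "\<And>\<omega>. \<omega> \<in> Omega \<Longrightarrow> \<omega> \<circ> Suc \<in> E \<longleftrightarrow> \<omega> \<in> E"
    and tails: "\<And>\<omega>. \<omega> \<in> E \<Longrightarrow> \<exists>a N. (\<forall>n\<ge>N. \<omega> n = a) \<and> measure (Px lam (fixpt lam a)) E = 1"
    and nonzero: "\<forall>x\<in>XL lam. measure (Px lam x) E \<noteq> 0"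
  shows "\<forall>x\<in>XL lam. measure (Px lam x) E = 1"
proof -
  let ?h = "\<lambda>y. measure (Px lam y) E"
  have cont: "continuous_on (XL lam) ?h"
    using E by (rule continuous_on_measure_Px)
  have "E \<in> sigma_sets Omega Cyls"
    using countable_in_sets_Px[OF E] by (simp add: sets_Px)
  then have harmonic: "\<forall>y\<in>XL lam. RW lam ?h y = ?h y"
    using shift by (simp add: RW_measure_Px)
  obtain x where x: "x \<in> XL lam" and min: "\<forall>y\<in>XL lam. ?h x \<le> ?h y"
    using continuous_attains_inf[OF compact_XL _ cont] zero_in_XL by auto
  interpret prob_space "Px lam x" by (rule prob_space_Px)
  have "emeasure (Px lam x) E \<noteq> 0"
    using nonzero x by (simp add: emeasure_eq_measure)
  moreover have "{\<omega>} \<in> sets (Px lam x)" if "\<omega> \<in> E" for \<omega>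
    using that E(2) by (intro countable_in_sets_Px) auto
  ultimately obtain \<omega> where \<omega>: "\<omega> \<in> E" "emeasure (Px lam x) {\<omega>} \<noteq> 0"
    using exists_atom_countable[OF E(1)] by blast
  with E(2) have "\<omega> \<in> Omega" by blast
  have path: "fold (tau lam) (map \<omega> [0..<n]) x \<in> XL lam \<and> ?h (fold (tau lam) (map \<omega> [0..<n]) x) = ?h x" for n
    using harmonic x min set_prefix_subset[OF \<open>\<omega> \<in> Omega\<close>] word_weight_pos_if_atom[OF \<open>\<omega> \<in> Omega\<close> \<omega>(2)]
    by (rule harmonic_min_along_word)
  obtain a N where tail: "\<forall>n\<ge>N. \<omega> n = a" and one: "?h (fixpt lam a) = 1"
    using tails \<omega>(1) by blast
  have "?h (fixpt lam a) = ?h x"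
    using path by (intro limit_in_XL(2)[OF cont _ _ tendsto_fold_tau_prefix[OF tail]]) auto
  then show ?thesis
    using min one prob_space.prob_le_1[OF prob_space_Px] by (simp add: order_antisym)
qed

end

context ifs
begin

lemma h0_eq: "h0 lam = (\<lambda>y. measure (Px lam y) (eventually_const_paths 0))"
  and h1_eq: "h1 lam = (\<lambda>y. measure (Px lam y) (eventually_const_paths (1/4)))"
  by (simp_all add: fun_eq_iff h0_def h1_def N0_eq N1_eq)

lemma eventually_const_paths_in_sigma_sets: "eventually_const_paths c \<in> sigma_sets Omega Cyls"
  using countable_in_sets_Px[OF countable_eventually_const_paths eventually_const_paths_subset, of c 0]
  by (simp add: sets_Px)

lemma continuous_on_h0: "continuous_on S (h0 lam)"
  and continuous_on_h1: "continuous_on S (h1 lam)"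
  unfolding h0_eq h1_eq
  by (intro continuous_on_measure_Px countable_eventually_const_paths eventually_const_paths_subset)+

lemma RW_h0: "RW lam (h0 lam) x = h0 lam x"
  unfolding h0_eq using eventually_const_paths_in_sigma_sets shift_eventually_const_paths_iff
  by (rule RW_measure_Px)

lemma RW_h1: "RW lam (h1 lam) x = h1 lam x"
  unfolding h1_eq using eventually_const_paths_in_sigma_sets shift_eventually_const_paths_iff
  by (rule RW_measure_Px)

lemma h0_add_h1:
  "h0 lam y + h1 lam y = measure (Px lam y) (eventually_const_paths 0 \<union> eventually_const_paths (1/4))"
proof -
  interpret prob_space "Px lam y" by (rule prob_space_Px)
  show ?thesis
    unfolding h0_eq h1_eq
    using eventually_const_paths_in_sigma_sets disjoint_eventually_const_paths[of 0 "1/4"]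
    by (intro finite_measure_Union[symmetric]) (auto simp: sets_Px)
qed

lemma h0_add_h1_le_1: "h0 lam y + h1 lam y \<le> 1"
  using prob_space.prob_le_1[OF prob_space_Px] by (simp add: h0_add_h1)

lemma h0_at_0: "h0 lam 0 = 1"
proof -
  have "W lam (tau lam 0 (fixpt lam 0)) = 1"
    by (simp add: fixpt_def W_tau_0)
  then show ?thesis
    using measure_Px_fixpt_eq_1[of 0 "eventually_const_paths 0"]
      countable_eventually_const_paths eventually_const_paths_subset const_in_eventually_const_paths[of 0]
    by (simp add: h0_eq fixpt_def)
qed

lemma h1_at_0: "h1 lam 0 = 0"
  using h0_add_h1_le_1[of 0] h0_at_0 measure_nonneg[of "Px lam 0" N1] by (simp add: h1_def)

lemma h0_eq_1_if_nonzero: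
  assumes "\<forall>x\<in>XL lam. h0 lam x \<noteq> 0"
  shows "\<forall>x\<in>XL lam. h0 lam x = 1"
  unfolding h0_eq
proof (rule measure_Px_eq_1_on_XL)
  fix \<omega> assume "\<omega> \<in> eventually_const_paths 0"
  then obtain N where "\<forall>n\<ge>N. \<omega> n = 0"
    by (auto simp: eventually_const_paths_def)
  moreover have "measure (Px lam (fixpt lam 0)) (eventually_const_paths 0) = 1"
    using h0_at_0 by (simp add: h0_eq fixpt_def)
  ultimately show "\<exists>a N. (\<forall>n\<ge>N. \<omega> n = a) \<and> measure (Px lam (fixpt lam a)) (eventually_const_paths 0) = 1"
    by blast
qed (use assms countable_eventually_const_paths eventually_const_paths_subset shift_eventually_const_paths_iff
     in \<open>simp_all add: h0_eq\<close>)

lemma W_tau_quarter_fixpt_eq_1: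
  assumes "n \<ge> 1" "lam = 1 - 1 / (2 * real n)"
  shows "W lam (tau lam (1/4) (fixpt lam (1/4))) = 1"
proof -
  have fixpt: "fixpt lam (1/4) = (2 * real n - 1) / 4"
    using assms(1) unfolding assms(2) fixpt_def by (simp add: field_simps)
  have "2 * pi * fixpt lam (1/4) = real n * pi - pi / 2"
    unfolding fixpt by (simp add: field_simps)
  then have "(sin (2 * pi * fixpt lam (1/4)))\<^sup>2 = (cos (real n * pi))\<^sup>2"
    by (simp add: sin_diff)
  also have "\<dots> = 1"
    by (simp add: power2_eq_square flip: power_mult_distrib)
  finally show ?thesis
    by (simp add: W_tau_quarter)
qed

end

(* The assumption says that at the fixed point c of tau_{1/4} the digit 1/4 is chosen with
   probability 1, so the walk started at c stays at c forever. *)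
locale trapped_ifs = ifs +
  assumes trapped: "W lam (tau lam (1/4) (fixpt lam (1/4))) = 1"
begin

lemma h1_at_fixpt: "h1 lam (fixpt lam (1/4)) = 1"
  using measure_Px_fixpt_eq_1[OF _ trapped, of "eventually_const_paths (1/4)"]
    countable_eventually_const_paths eventually_const_paths_subset const_in_eventually_const_paths[of "1/4"]
  by (simp add: h1_eq)

lemma h0_at_fixpt: "h0 lam (fixpt lam (1/4)) = 0"
  using h0_add_h1_le_1[of "fixpt lam (1/4)"] h1_at_fixpt measure_nonneg[of "Px lam (fixpt lam (1/4))" N0]
  by (simp add: h0_def)

lemma h0_add_h1_eq_1_if_nonzero:
  assumes "\<forall>x\<in>XL lam. h0 lam x + h1 lam x \<noteq> 0"
  shows "\<forall>x\<in>XL lam. h0 lam x + h1 lam x = 1"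
  unfolding h0_add_h1
proof (rule measure_Px_eq_1_on_XL)
  let ?E = "eventually_const_paths 0 \<union> eventually_const_paths (1/4)"
  fix \<omega> assume "\<omega> \<in> ?E"
  then obtain a N where "a \<in> {0, 1/4}" "\<forall>n\<ge>N. \<omega> n = a"
    by (auto simp: eventually_const_paths_def simp del: eq_divide_eq_numeral1)
  moreover have "measure (Px lam (fixpt lam 0)) ?E = 1" "measure (Px lam (fixpt lam (1/4))) ?E = 1"
    using h0_add_h1[of 0] h0_add_h1[of "fixpt lam (1/4)"] h0_at_0 h1_at_0 h0_at_fixpt h1_at_fixpt
    by (simp_all add: fixpt_def)
  ultimately show "\<exists>a N. (\<forall>n\<ge>N. \<omega> n = a) \<and> measure (Px lam (fixpt lam a)) ?E = 1"
    by (auto simp del: eq_divide_eq_numeral1)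
qed (use assms countable_eventually_const_paths eventually_const_paths_subset shift_eventually_const_paths_iff
     in \<open>auto simp: h0_add_h1\<close>)

end

theorem lemma4p1:
  fixes lam :: real
  assumes "0 < lam" and "lam < 1"
  shows "(continuous_on (XL lam) (h0 lam)
          \<and> (\<forall>x\<in>XL lam. RW lam (h0 lam) x = h0 lam x)
          \<and> ((\<forall>x\<in>XL lam. h0 lam x \<noteq> 0) \<longrightarrow> (\<forall>x\<in>XL lam. h0 lam x = 1)))
       \<and> (\<forall>n::nat. n \<ge> 1 \<and> lam = 1 - 1 / (2 * real n) \<longrightarrow>
            continuous_on (XL lam) (h1 lam)
          \<and> (\<forall>x\<in>XL lam. RW lam (h1 lam) x = h1 lam x)
          \<and> (\<exists>x\<in>XL lam. h0 lam x = 0)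
          \<and> (\<exists>x\<in>XL lam. h1 lam x = 0)
          \<and> (\<exists>x\<in>XL lam. \<exists>y\<in>XL lam. h0 lam x \<noteq> h0 lam y)
          \<and> (\<exists>x\<in>XL lam. \<exists>y\<in>XL lam. h1 lam x \<noteq> h1 lam y)
          \<and> ((\<forall>x\<in>XL lam. h0 lam x + h1 lam x \<noteq> 0) \<longrightarrow>
               (\<forall>x\<in>XL lam. h0 lam x + h1 lam x = 1)))"
proof -
  interpret ifs lam
    using assms by unfold_locales
  have c: "fixpt lam (1/4) \<in> XL lam"
    by (rule fixpt_in_XL) simp
  show ?thesis
  proof (intro conjI allI impI)
    assume "\<forall>x\<in>XL lam. h0 lam x \<noteq> 0"
    then show "\<forall>x\<in>XL lam. h0 lam x = 1" by (rule h0_eq_1_if_nonzero)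
  next
    fix n :: nat assume n: "n \<ge> 1 \<and> lam = 1 - 1 / (2 * real n)"
    interpret trapped_ifs lam
      by unfold_locales (use n W_tau_quarter_fixpt_eq_1 in auto)
    show "continuous_on (XL lam) (h1 lam)" by (rule continuous_on_h1)
    show "\<forall>x\<in>XL lam. RW lam (h1 lam) x = h1 lam x" by (simp add: RW_h1)
    show "\<exists>x\<in>XL lam. h0 lam x = 0" using c h0_at_fixpt by blast
    show "\<exists>x\<in>XL lam. h1 lam x = 0" using zero_in_XL h1_at_0 by blast
    show "\<exists>x\<in>XL lam. \<exists>y\<in>XL lam. h0 lam x \<noteq> h0 lam y" using c zero_in_XL h0_at_0 h0_at_fixpt by force
    show "\<exists>x\<in>XL lam. \<exists>y\<in>XL lam. h1 lam x \<noteq> h1 lam y" using c zero_in_XL h1_at_0 h1_at_fixpt by force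
    {
      assume "\<forall>x\<in>XL lam. h0 lam x + h1 lam x \<noteq> 0"
      then show "\<forall>x\<in>XL lam. h0 lam x + h1 lam x = 1" by (rule h0_add_h1_eq_1_if_nonzero)
    }
  qed (simp_all add: continuous_on_h0 RW_h0)
qed

end
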